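(* Let $\mathfrak{L}$ be a left Leibniz algebra over a field $\mathbb{F}$, and let $M$ be a left $\mathfrak{L}$-module. Then: (a) $\mathrm{HL}^n(\mathfrak{L},M_s)=\widetilde{\mathrm{HL}}^n(\mathfrak{L},M)$ for every integer $n\ge 0$; (b) $\mathrm{HL}^0(\mathfrak{L},M_a)=M$, and $\mathrm{HL}^n(\mathfrak{L},M_a)\cong\widetilde{\mathrm{HL}}^{n-1}(\mathfrak{L},\mathrm{Hom}_{\mathbb{F}}(\mathfrak{L},M))=\mathrm{HL}^{n-1}(\mathfrak{L},\mathrm{Hom}_{\mathbb{F}}(\mathfrak{L},M)_s)$ for every integer $n\ge 1$, where $\mathrm{Hom}_{\mathbb{F}}(\mathfrak{L},M)$ is a left $\mathfrak{L}$-module via $(x\cdot f)(y):=x\cdot f(y)-f(xy)$.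
   Context: A left Leibniz algebra is a vector space with bilinear product satisfying $x(yz)=(xy)z+y(xz)$. A left $\mathfrak{L}$-module is a vector space $M$ with bilinear $x\cdot m$ such that $(xy)\cdot m=x\cdot(y\cdot m)-y\cdot(x\cdot m)$. A bimodule additionally has a right action with $(x\cdot m)\cdot y=x\cdot(m\cdot y)-m\cdot(xy)$ and $(m\cdot x)\cdot y=m\cdot(xy)-x\cdot(m\cdot y)$. For a left module $M$, $M_s$ is the bimodule with right action $m\cdot x:=-x\cdot m$ and $M_a$ the bimodule with right action $m\cdot x:=0$. $\mathrm{HL}^n(\mathfrak{L},M)$ is the cohomology of $\mathrm{CL}^n(\mathfrak{L},M)=\mathrm{Hom}_{\mathbb{F}}(\mathfrak{L}^{\otimes n},M)$ with $(\mathrm{d}^nf)(x_1,\dots,x_{n+1})=\sum_{i=1}^n(-1)^{i+1}x_i\cdot f(\dots,\hat{x}_i,\dots)+(-1)^{n+1}f(x_1,\dots,x_n)\cdot x_{n+1}+\sum_{i<j}(-1)^if(x_1,\dots,\hat{x}_i,\dots,x_ix_j,\dots,x_{n+1})$ ($x_ix_j$ in the $j$-th position). For a left module $M$, $\widetilde{\mathrm{HL}}^n(\mathfrak{L},M)$ is the cohomology of $\mathrm{CL}^n(\mathfrak{L},M)$ with $(\widetilde{\mathrm{d}}^nf)(x_1,\dots,x_{n+1})=\sum_{i=1}^{n+1}(-1)^{i+1}x_i\cdot f(x_1,\dots,\hat{x}_i,\dots,x_{n+1})+\sum_{i<j}(-1)^if(x_1,\dots,\hat{x}_i,\dots,x_ix_j,\dots,x_{n+1})$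 ($x_ix_j$ in the $j$-th position). *)

theory Defs
  imports Main "HOL.Vector_Spaces" "HOL-Library.Function_Algebras"
begin

definition left_leibniz_algebra ::
  "('k::field \<Rightarrow> 'l::ab_group_add \<Rightarrow> 'l) \<Rightarrow> ('l \<Rightarrow> 'l \<Rightarrow> 'l) \<Rightarrow> bool" where
  "left_leibniz_algebra sl mult \<longleftrightarrow>
     vector_space sl \<and>
     (\<forall>x. Vector_Spaces.linear sl sl (mult x)) \<and>
     (\<forall>y. Vector_Spaces.linear sl sl (\<lambda>x. mult x y)) \<and>
     (\<forall>x y z. mult x (mult y z) = mult (mult x y) z + mult y (mult x z))"

definition left_module ::
  "('k::field \<Rightarrow> 'l::ab_group_add \<Rightarrow> 'l) \<Rightarrow> ('l \<Rightarrow> 'l \<Rightarrow> 'l) \<Rightarrow>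
   ('k \<Rightarrow> 'v::ab_group_add \<Rightarrow> 'v) \<Rightarrow> 'v set \<Rightarrow> ('l \<Rightarrow> 'v \<Rightarrow> 'v) \<Rightarrow> bool" where
  "left_module sl mult sc V act \<longleftrightarrow>
     vector_space sc \<and>
     0 \<in> V \<and> (\<forall>m\<in>V. \<forall>n\<in>V. m + n \<in> V) \<and> (\<forall>c. \<forall>m\<in>V. sc c m \<in> V) \<and>
     (\<forall>x. \<forall>m\<in>V. act x m \<in> V) \<and>
     (\<forall>x y. \<forall>m\<in>V. act (x + y) m = act x m + act y m) \<and>
     (\<forall>c x. \<forall>m\<in>V. act (sl c x) m = sc c (act x m)) \<and>
     (\<forall>x. \<forall>m\<in>V. \<forall>n\<in>V. act x (m + n) = act x m + act x n) \<and>
     (\<forall>c x. \<forall>m\<in>V. act x (sc c m) = sc c (act x m)) \<and>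
     (\<forall>x y. \<forall>m\<in>V. act (mult x y) m = act x (act y m) - act y (act x m))"

definition ract_s :: "('l \<Rightarrow> 'v \<Rightarrow> 'v::ab_group_add) \<Rightarrow> 'v \<Rightarrow> 'l \<Rightarrow> 'v" where
  "ract_s act m x = - act x m"

definition ract_a :: "('l \<Rightarrow> 'v \<Rightarrow> 'v::ab_group_add) \<Rightarrow> 'v \<Rightarrow> 'l \<Rightarrow> 'v" where
  "ract_a act m x = 0"

definition hom_space ::
  "('k::field \<Rightarrow> 'l::ab_group_add \<Rightarrow> 'l) \<Rightarrow> ('k \<Rightarrow> 'm::ab_group_add \<Rightarrow> 'm) \<Rightarrow> ('l \<Rightarrow> 'm) set" where
  "hom_space sl sm = {h. Vector_Spaces.linear sl sm h}"

definition hom_scale :: "('k \<Rightarrow> 'm \<Rightarrow> 'm) \<Rightarrow> 'k \<Rightarrow> ('l \<Rightarrow> 'm) \<Rightarrow> ('l \<Rightarrow> 'm)" where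
  "hom_scale sm c h = (\<lambda>y. sm c (h y))"

definition hom_act ::
  "('l \<Rightarrow> 'l \<Rightarrow> 'l) \<Rightarrow> ('l \<Rightarrow> 'm \<Rightarrow> 'm) \<Rightarrow> 'l \<Rightarrow> ('l \<Rightarrow> 'm::ab_group_add) \<Rightarrow> ('l \<Rightarrow> 'm)" where
  "hom_act mult act x h = (\<lambda>y. act x (h y) - h (mult x y))"

text \<open>CL^n(L,V) = Hom_F(L^{\<otimes>n}, V), represented as n-multilinear maps on lists of length n
  (extended by 0 on lists of other lengths).\<close>
definition cochain ::
  "('k::field \<Rightarrow> 'l::ab_group_add \<Rightarrow> 'l) \<Rightarrow> ('k \<Rightarrow> 'v::ab_group_add \<Rightarrow> 'v) \<Rightarrow> 'v set \<Rightarrow> nat \<Rightarrow>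
   ('l list \<Rightarrow> 'v) \<Rightarrow> bool" where
  "cochain sl sc V n f \<longleftrightarrow>
     (\<forall>xs. length xs = n \<longrightarrow> f xs \<in> V) \<and>
     (\<forall>xs. length xs \<noteq> n \<longrightarrow> f xs = 0) \<and>
     (\<forall>xs i a b. length xs = n \<and> i < n \<longrightarrow> f (xs[i := a + b]) = f (xs[i := a]) + f (xs[i := b])) \<and>
     (\<forall>xs i c a. length xs = n \<and> i < n \<longrightarrow> f (xs[i := sl c a]) = sc c (f (xs[i := a])))"

definition cochains ::
  "('k::field \<Rightarrow> 'l::ab_group_add \<Rightarrow> 'l) \<Rightarrow> ('k \<Rightarrow> 'v::ab_group_add \<Rightarrow> 'v) \<Rightarrow> 'v set \<Rightarrow> nat \<Rightarrow>
   ('l list \<Rightarrow> 'v) set" where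
  "cochains sl sc V n = {f. cochain sl sc V n f}"

definition cscale :: "('k \<Rightarrow> 'v \<Rightarrow> 'v) \<Rightarrow> 'k \<Rightarrow> ('l list \<Rightarrow> 'v) \<Rightarrow> ('l list \<Rightarrow> 'v)" where
  "cscale sc c f = (\<lambda>xs. sc c (f xs))"

definition sgnv :: "nat \<Rightarrow> 'v::ab_group_add \<Rightarrow> 'v" where
  "sgnv k v = (if even k then v else - v)"

definition del :: "nat \<Rightarrow> 'a list \<Rightarrow> 'a list" where
  "del i xs = take i xs @ drop (Suc i) xs"

text \<open>The Leibniz coboundary d^n for a bimodule (left action lact, right action ract).
  Indices are 0-based: entry i of the list is x_{i+1}.\<close>
definition dL ::
  "('l \<Rightarrow> 'l \<Rightarrow> 'l) \<Rightarrow> ('l \<Rightarrow> 'v \<Rightarrow> 'v) \<Rightarrow> ('v \<Rightarrow> 'l \<Rightarrow> 'v) \<Rightarrow> nat \<Rightarrow>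
   ('l list \<Rightarrow> 'v::ab_group_add) \<Rightarrow> ('l list \<Rightarrow> 'v)" where
  "dL mult lact ract n f xs =
     (if length xs = Suc n then
        (\<Sum>i<n. sgnv i (lact (xs ! i) (f (del i xs))))
        + sgnv (Suc n) (ract (f (take n xs)) (xs ! n))
        + (\<Sum>j<Suc n. \<Sum>i<j. sgnv (Suc i) (f (del i (xs[j := mult (xs ! i) (xs ! j)]))))
      else 0)"

definition dLt ::
  "('l \<Rightarrow> 'l \<Rightarrow> 'l) \<Rightarrow> ('l \<Rightarrow> 'v \<Rightarrow> 'v) \<Rightarrow> nat \<Rightarrow>
   ('l list \<Rightarrow> 'v::ab_group_add) \<Rightarrow> ('l list \<Rightarrow> 'v)" where
  "dLt mult lact n f xs =
     (if length xs = Suc n then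
        (\<Sum>i<Suc n. sgnv i (lact (xs ! i) (f (del i xs))))
        + (\<Sum>j<Suc n. \<Sum>i<j. sgnv (Suc i) (f (del i (xs[j := mult (xs ! i) (xs ! j)]))))
      else 0)"

definition cocycles where
  "cocycles sl sc V D n = {f \<in> cochains sl sc V n. D n f = 0}"

definition coboundaries where
  "coboundaries sl sc V D n =
     (if n = 0 then {0} else D (n - 1) ` cochains sl sc V (n - 1))"

definition coset :: "'a::ab_group_add set \<Rightarrow> 'a \<Rightarrow> 'a set" where
  "coset B z = (\<lambda>b. z + b) ` B"

definition quot :: "'a::ab_group_add set \<Rightarrow> 'a set \<Rightarrow> 'a set set" where
  "quot Z B = coset B ` Z"

definition HL where
  "HL sl mult sc V lact ract n =
     quot (cocycles sl sc V (dL mult lact ract) n) (coboundaries sl sc V (dL mult lact ract) n)"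

definition HLt where
  "HLt sl mult sc V lact n =
     quot (cocycles sl sc V (dLt mult lact) n) (coboundaries sl sc V (dLt mult lact) n)"

text \<open>Linear isomorphism of quotient spaces Z1/B1 \<cong> Z2/B2 (scalar multiplications sc1, sc2):
  a bijection between the sets of cosets that is compatible with addition and scalar
  multiplication of cosets (computed on representatives).\<close>
definition quot_iso ::
  "('k \<Rightarrow> 'a::ab_group_add \<Rightarrow> 'a) \<Rightarrow> 'a set \<Rightarrow> 'a set \<Rightarrow>
   ('k \<Rightarrow> 'b::ab_group_add \<Rightarrow> 'b) \<Rightarrow> 'b set \<Rightarrow> 'b set \<Rightarrow> bool" where
  "quot_iso sc1 Z1 B1 sc2 Z2 B2 \<longleftrightarrow>
     (\<exists>\<Phi>. bij_betw \<Phi> (quot Z1 B1) (quot Z2 B2) \<and>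
        (\<forall>z\<in>Z1. \<forall>w\<in>Z1. \<forall>z'\<in>Z2. \<forall>w'\<in>Z2.
           \<Phi> (coset B1 z) = coset B2 z' \<longrightarrow> \<Phi> (coset B1 w) = coset B2 w' \<longrightarrow>
           \<Phi> (coset B1 (z + w)) = coset B2 (z' + w')) \<and>
        (\<forall>c. \<forall>z\<in>Z1. \<forall>z'\<in>Z2.
           \<Phi> (coset B1 z) = coset B2 z' \<longrightarrow> \<Phi> (coset B1 (sc1 c z)) = coset B2 (sc2 c z')))"

definition HL_iso_HLt where
  "HL_iso_HLt sl mult sc V lact ract n sc' V' lact' m \<longleftrightarrow>
     quot_iso (cscale sc)
       (cocycles sl sc V (dL mult lact ract) n) (coboundaries sl sc V (dL mult lact ract) n)
       (cscale sc')
       (cocycles sl sc' V' (dLt mult lact') m) (coboundaries sl sc' V' (dLt mult lact') m)"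

definition HL_iso_space where
  "HL_iso_space sl mult sc V lact ract n sc' V' \<longleftrightarrow>
     quot_iso (cscale sc)
       (cocycles sl sc V (dL mult lact ract) n) (coboundaries sl sc V (dL mult lact ract) n)
       sc' V' {0}"

end

theory Submission
  imports Defs
begin

text \<open>For M_s the right-action term (-1)^(n+1) f(x_1..x_n) x_(n+1) of d^n equals
  (-1)^n x_(n+1) f(x_1..x_n), which is exactly the missing last summand of the left-action sum
  of d~^n; so the two complexes coincide. For M_a the right-action term vanishes and the last
  argument of a cochain enters d^n only linearly, either as a plain argument or through
  f(..., x_i x_(n+1)). Currying the last argument therefore identifies CL^(n+1)(L, M_a) with
  CL^n(L, Hom(L, M)) and carries d^(n+1) to d~^n for the action (x.f)(y) = x.f(y) - f(xy);
  such an isomorphism of complexes induces isomorphisms in cohomology. In degree 0 the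
  coboundary vanishes, and a 0-cochain is just an element of M.\<close>

lemma coset_eq_iff:
  assumes "0 \<in> B" and diff_closed: "\<And>a b. a \<in> B \<Longrightarrow> b \<in> B \<Longrightarrow> a - b \<in> B"
  shows "coset B z = coset B w \<longleftrightarrow> z - w \<in> B"
proof
  assume "coset B z = coset B w"
  moreover have "z \<in> coset B z" unfolding coset_def using assms(1) by (metis add_0_right image_eqI)
  ultimately obtain b where "b \<in> B" "z = w + b" unfolding coset_def by auto
  then show "z - w \<in> B" by simp
next
  assume zw: "z - w \<in> B"
  have add_closed: "a + b \<in> B" if "a \<in> B" "b \<in> B" for a b
    using diff_closed[OF that(1) diff_closed[OF assms(1) that(2)]] by simp
  show "coset B z = coset B w"
    unfolding coset_def
  proof (intro equalityI subsetI)
    fix x assume "x \<in> (\<lambda>b. z + b) ` B"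
    then obtain b where "b \<in> B" "x = w + ((z - w) + b)" by auto
    then show "x \<in> (\<lambda>b. w + b) ` B" using add_closed[OF zw] by blast
  next
    fix x assume "x \<in> (\<lambda>b. w + b) ` B"
    then obtain b where "b \<in> B" "x = z + (b - (z - w))" by auto
    then show "x \<in> (\<lambda>b. z + b) ` B" using diff_closed zw by blast
  qed
qed

lemma image_coset:
  assumes "\<And>a b. \<phi> (a + b) = \<phi> a + \<phi> b" and "\<phi> ` B1 = B2"
  shows "\<phi> ` coset B1 z = coset B2 (\<phi> z)"
  unfolding coset_def image_image assms(1) using assms(2) by (metis image_image)

text \<open>The isomorphism sends a coset to its image under \<phi>; injectivity is needed only on a set
  containing all cosets, since cochains are zero-extended functions on all lists.\<close>
lemma quot_iso_by_injective_map:
  assumes inj: "inj_on \<phi> S"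
    and cosets_in_S: "\<And>z b. z \<in> Z1 \<Longrightarrow> b \<in> B1 \<Longrightarrow> z + b \<in> S"
    and Z_image: "\<phi> ` Z1 = Z2" and B_image: "\<phi> ` B1 = B2"
    and additive: "\<And>a b. \<phi> (a + b) = \<phi> a + \<phi> b"
    and B_zero: "0 \<in> B1" and B_diff: "\<And>a b. a \<in> B1 \<Longrightarrow> b \<in> B1 \<Longrightarrow> a - b \<in> B1"
    and B_scale: "\<And>c a. a \<in> B1 \<Longrightarrow> sc1 c a \<in> B1"
    and scale_diff: "\<And>c a b. sc1 c a - sc1 c b = sc1 c (a - b)"
    and homogeneous: "\<And>c a. \<phi> (sc1 c a) = sc2 c (\<phi> a)"
  shows "quot_iso sc1 Z1 B1 sc2 Z2 B2"
proof -
  note same_coset = coset_eq_iff[of B1, OF B_zero B_diff]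
  have img: "\<phi> ` coset B1 z = coset B2 (\<phi> z)" for z
    by (rule image_coset[OF additive B_image])
  have coset_in_S: "coset B1 z \<subseteq> S" if "z \<in> Z1" for z
    using cosets_in_S[OF that] unfolding coset_def by auto
  have coset_inj: "coset B1 z = coset B1 w"
    if "z \<in> Z1" "w \<in> Z1" "\<phi> ` coset B1 z = \<phi> ` coset B1 w" for z w
    using inj_on_image_eq_iff[OF inj coset_in_S[OF that(1)] coset_in_S[OF that(2)]] that(3) by blast
  have preimage: "\<exists>z''\<in>Z1. z' = \<phi> z'' \<and> z - z'' \<in> B1"
    if z: "z \<in> Z1" and z': "z' \<in> Z2" and same: "\<phi> ` coset B1 z = coset B2 z'" for z z'
  proof -
    obtain z'' where z'': "z'' \<in> Z1" "z' = \<phi> z''" using z' Z_image by blast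
    then have "coset B1 z = coset B1 z''" using coset_inj[OF z] same img by simp
    then show ?thesis using z'' same_coset by blast
  qed
  show ?thesis
    unfolding quot_iso_def
  proof (intro exI[of _ "\<lambda>C. \<phi> ` C"] conjI ballI allI impI)
    show "bij_betw ((`) \<phi>) (quot Z1 B1) (quot Z2 B2)"
      unfolding bij_betw_def
    proof
      show "inj_on ((`) \<phi>) (quot Z1 B1)" unfolding quot_def inj_on_def using coset_inj by blast
      show "(`) \<phi> ` quot Z1 B1 = quot Z2 B2"
        unfolding quot_def image_image img Z_image[symmetric] ..
    qed
  next
    fix z w z' w'
    assume "z \<in> Z1" "w \<in> Z1" "z' \<in> Z2" "w' \<in> Z2"
      and "\<phi> ` coset B1 z = coset B2 z'" "\<phi> ` coset B1 w = coset B2 w'"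
    then obtain z'' w'' where z'': "z' = \<phi> z''" "z - z'' \<in> B1"
      and w'': "w' = \<phi> w''" "w - w'' \<in> B1"
      using preimage by meson
    have "(z + w) - (z'' + w'') = (z - z'') - (0 - (w - w''))" by simp
    then have "(z + w) - (z'' + w'') \<in> B1" using B_diff B_zero z''(2) w''(2) by metis
    then have "coset B1 (z + w) = coset B1 (z'' + w'')" using same_coset by blast
    then show "\<phi> ` coset B1 (z + w) = coset B2 (z' + w')"
      using img z''(1) w''(1) additive by metis
  next
    fix c z z'
    assume "z \<in> Z1" "z' \<in> Z2" "\<phi> ` coset B1 z = coset B2 z'"
    then obtain z'' where z'': "z' = \<phi> z''" "z - z'' \<in> B1" using preimage by meson
    have "sc1 c z - sc1 c z'' \<in> B1" using scale_diff B_scale[OF z''(2)] by simp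
    then have "coset B1 (sc1 c z) = coset B1 (sc1 c z'')" using same_coset by blast
    then show "\<phi> ` coset B1 (sc1 c z) = coset B2 (sc2 c z')"
      using img z''(1) homogeneous by metis
  qed
qed

lemma sgnv_zero [simp]: "sgnv k 0 = 0"
  by (simp add: sgnv_def)

lemma sgnv_Suc: "sgnv (Suc k) v = - sgnv k v"
  by (simp add: sgnv_def)

lemma sgnv_diff: "sgnv k (a - b) = sgnv k a - sgnv k b"
  by (simp add: sgnv_def)

lemma sgnv_apply: "sgnv k h y = sgnv k (h y)"
  by (simp add: sgnv_def)

lemma sum_apply: "(\<Sum>i\<in>A. f i) y = (\<Sum>i\<in>A. f i y)"
  by (induct A rule: infinite_finite_induct) auto

lemma del_append: "i < length xs \<Longrightarrow> del i (xs @ [y]) = del i xs @ [y]"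
  by (simp add: del_def)

lemma length_del: "i < length xs \<Longrightarrow> length (del i xs) = length xs - 1"
  by (simp add: del_def)

lemma dL_ract_s: "dL mult act (ract_s act) = dLt mult act"
proof (intro ext)
  fix n f xs
  show "dL mult act (ract_s act) n f xs = dLt mult act n f xs"
  proof (cases "length xs = Suc n")
    case True
    then have "del n xs = take n xs" by (simp add: del_def)
    with True show ?thesis by (simp add: dL_def dLt_def ract_s_def sgnv_def)
  qed (simp add: dL_def dLt_def)
qed

lemma HL_ract_s: "HL sl mult sc V act (ract_s act) n = HLt sl mult sc V act n"
  by (simp only: HL_def HLt_def dL_ract_s)

lemma dL_ract_a_0: "dL mult act (ract_a act) 0 f = 0"
  by (auto simp: dL_def ract_a_def)

lemma dL_ract_a_diff:
  assumes "\<And>x m n. act x (m + n) = act x m + act x n"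
  shows "dL mult act (ract_a act) n (f - g) = dL mult act (ract_a act) n f - dL mult act (ract_a act) n g"
proof -
  have "act x (m - n) = act x m - act x n" for x m n
    using assms[of x "m - n" n] by (simp add: eq_diff_eq)
  then show ?thesis by (auto simp: dL_def ract_a_def sgnv_diff sum_subtractf)
qed

lemma dL_ract_a_cscale:
  assumes "module sm" and "\<And>x c m. act x (sm c m) = sm c (act x m)"
  shows "dL mult act (ract_a act) n (cscale sm c f) = cscale sm c (dL mult act (ract_a act) n f)"
proof -
  interpret module sm by fact
  have "sgnv k (sm c v) = sm c (sgnv k v)" for k v by (simp add: sgnv_def)
  with assms(2) show ?thesis
    by (auto simp: dL_def ract_a_def cscale_def scale_sum_right scale_right_distrib)
qed

lemma cochain_zero: "module sm \<Longrightarrow> cochain sl sm UNIV n 0"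
  by (simp add: cochain_def module.scale_zero_right)

lemma cochain_diff:
  assumes "module sm" "cochain sl sm UNIV n f" "cochain sl sm UNIV n g"
  shows "cochain sl sm UNIV n (f - g)"
proof -
  interpret module sm by fact
  show ?thesis using assms(2,3) unfolding cochain_def by (simp add: scale_right_diff_distrib)
qed

lemma cochain_cscale:
  assumes "module sm" "cochain sl sm UNIV n f"
  shows "cochain sl sm UNIV n (cscale sm c f)"
proof -
  interpret module sm by fact
  show ?thesis using assms(2) unfolding cochain_def cscale_def
    by (simp add: scale_right_distrib mult.commute)
qed

lemma cscale_diff:
  assumes "module sm"
  shows "cscale sm c f - cscale sm c g = cscale sm c (f - g)"
proof -
  interpret module sm by fact
  show ?thesis by (auto simp: cscale_def scale_right_diff_distrib)
qed

lemma HL_ract_a_0_iso: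
  fixes sl :: "'k::field \<Rightarrow> 'l::ab_group_add \<Rightarrow> 'l" and sm :: "'k \<Rightarrow> 'm::ab_group_add \<Rightarrow> 'm"
  assumes "module sm"
  shows "HL_iso_space sl mult sm UNIV act (ract_a act) 0 sm UNIV"
proof -
  have Z: "cocycles sl sm UNIV (dL mult act (ract_a act)) 0 = cochains sl sm UNIV 0"
    by (simp add: cocycles_def dL_ract_a_0)
  have B: "coboundaries sl sm UNIV (dL mult act (ract_a act)) 0 = {0}"
    by (simp add: coboundaries_def)
  have value_at_Nil: "(\<lambda>f. f []) ` cochains sl sm UNIV 0 = UNIV"
  proof (intro equalityI subsetI)
    fix m :: 'm
    have "(\<lambda>xs. if xs = [] then m else 0) \<in> cochains sl sm UNIV 0"
      by (simp add: cochains_def cochain_def)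
    then show "m \<in> (\<lambda>f. f []) ` cochains sl sm UNIV 0" by (rule rev_image_eqI) simp
  qed simp
  show ?thesis unfolding HL_iso_space_def Z B
  proof (rule quot_iso_by_injective_map[where S = "{f. \<forall>xs. xs \<noteq> [] \<longrightarrow> f xs = 0}"])
    show "inj_on (\<lambda>f :: 'l list \<Rightarrow> 'm. f []) {f. \<forall>xs. xs \<noteq> [] \<longrightarrow> f xs = 0}"
    proof (rule inj_onI, rule ext)
      fix f g :: "'l list \<Rightarrow> 'm" and xs
      assume "f \<in> {f. \<forall>xs. xs \<noteq> [] \<longrightarrow> f xs = 0}" "g \<in> {f. \<forall>xs. xs \<noteq> [] \<longrightarrow> f xs = 0}"
        and "f [] = g []"
      then show "f xs = g xs" by (cases xs) auto
    qed
    show "z + b \<in> {f. \<forall>xs. xs \<noteq> [] \<longrightarrow> f xs = 0}" if "z \<in> cochains sl sm UNIV 0" "b \<in> {0}" for z b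
      using that by (simp add: cochains_def cochain_def)
    show "cscale sm c a \<in> {0}" if "a \<in> {0}" for c and a :: "'l list \<Rightarrow> 'm"
      using that module.scale_zero_right[OF assms] by (simp add: cscale_def fun_eq_iff)
    show "cscale sm c a - cscale sm c b = cscale sm c (a - b)" for c and a b :: "'l list \<Rightarrow> 'm"
      by (rule cscale_diff[OF assms])
  qed (simp_all add: value_at_Nil cscale_def)
qed

definition curry_cochain :: "nat \<Rightarrow> ('l list \<Rightarrow> 'm::ab_group_add) \<Rightarrow> 'l list \<Rightarrow> 'l \<Rightarrow> 'm" where
  "curry_cochain k f = (\<lambda>xs. if length xs = k then (\<lambda>y. f (xs @ [y])) else 0)"

definition uncurry_cochain :: "nat \<Rightarrow> ('l list \<Rightarrow> 'l \<Rightarrow> 'm::ab_group_add) \<Rightarrow> 'l list \<Rightarrow> 'm" where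
  "uncurry_cochain k g = (\<lambda>xs. if length xs = Suc k then g (butlast xs) (last xs) else 0)"

lemma length_Suc_conv_snoc: "length xs = Suc k \<longleftrightarrow> (\<exists>zs w. xs = zs @ [w] \<and> length zs = k)"
  by (metis append_butlast_last_id length_append_singleton length_butlast diff_Suc_1 list.size(3)
      nat.distinct(1))

lemma curry_cochain_add: "curry_cochain k (f + g) = curry_cochain k f + curry_cochain k g"
  by (auto simp: curry_cochain_def fun_eq_iff)

lemma curry_cochain_zero: "curry_cochain k 0 = 0"
  by (auto simp: curry_cochain_def fun_eq_iff)

lemma curry_cochain_cscale:
  "module sm \<Longrightarrow> curry_cochain k (cscale sm c f) = cscale (hom_scale sm) c (curry_cochain k f)"
  by (auto simp: curry_cochain_def fun_eq_iff cscale_def hom_scale_def module.scale_zero_right)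

lemma curry_uncurry_cochain:
  assumes "cochain sl sc V k g"
  shows "curry_cochain k (uncurry_cochain k g) = g"
proof (intro ext)
  fix xs y
  show "curry_cochain k (uncurry_cochain k g) xs y = g xs y"
    using assms unfolding cochain_def by (auto simp: curry_cochain_def uncurry_cochain_def)
qed

lemma inj_on_curry_cochain:
  "inj_on (curry_cochain k) {f :: 'l list \<Rightarrow> 'm::ab_group_add. \<forall>xs. length xs \<noteq> Suc k \<longrightarrow> f xs = 0}"
proof (rule inj_onI, rule ext)
  fix f g :: "'l list \<Rightarrow> 'm" and xs
  assume f: "f \<in> {f. \<forall>xs. length xs \<noteq> Suc k \<longrightarrow> f xs = 0}"
    and g: "g \<in> {f. \<forall>xs. length xs \<noteq> Suc k \<longrightarrow> f xs = 0}"
    and curry_eq: "curry_cochain k f = curry_cochain k g"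
  show "f xs = g xs"
  proof (cases "length xs = Suc k")
    case True
    then obtain zs w where "xs = zs @ [w]" "length zs = k" by (auto simp: length_Suc_conv_snoc)
    then show ?thesis using fun_cong[OF fun_cong[OF curry_eq, of zs], of w] by (simp add: curry_cochain_def)
  next
    case False
    then show ?thesis using f g by simp
  qed
qed

lemma curry_cochain_cochain:
  fixes sl :: "'k::field \<Rightarrow> 'l::ab_group_add \<Rightarrow> 'l"
  assumes "vector_space sl" "vector_space sm" and f: "cochain sl sm UNIV (Suc k) f"
  shows "cochain sl (hom_scale sm) (hom_space sl sm) k (curry_cochain k f)"
proof -
  have f_add: "\<And>xs i a b. length xs = Suc k \<Longrightarrow> i < Suc k \<Longrightarrow> f (xs[i := a + b]) = f (xs[i := a]) + f (xs[i := b])"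
    and f_scale: "\<And>xs i c a. length xs = Suc k \<Longrightarrow> i < Suc k \<Longrightarrow> f (xs[i := sl c a]) = sm c (f (xs[i := a]))"
    using f unfolding cochain_def by blast+
  have linear_last: "(\<lambda>y. f (xs @ [y])) \<in> hom_space sl sm" if "length xs = k" for xs
  proof -
    have "(xs @ [0])[k := a] = xs @ [a]" for a using that by (simp add: list_update_append)
    then show ?thesis unfolding hom_space_def linear_iff
      using assms(1,2) f_add[of "xs @ [0]" k] f_scale[of "xs @ [0]" k] that by simp
  qed
  have update_snoc: "xs[i := a] @ [y] = (xs @ [y])[i := a]" if "i < length xs" for xs :: "'l list" and i a y
    using that by (simp add: list_update_append)
  show ?thesis
    unfolding cochain_def
  proof (intro conjI allI impI)
    fix xs :: "'l list" and i a b c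
    assume "length xs = k \<and> i < k"
    then show "curry_cochain k f (xs[i := a + b]) = curry_cochain k f (xs[i := a]) + curry_cochain k f (xs[i := b])"
      and "curry_cochain k f (xs[i := sl c a]) = hom_scale sm c (curry_cochain k f (xs[i := a]))"
      by (auto simp: curry_cochain_def hom_scale_def update_snoc f_add f_scale)
  qed (simp_all add: curry_cochain_def linear_last)
qed

lemma uncurry_cochain_cochain:
  fixes sl :: "'k::field \<Rightarrow> 'l::ab_group_add \<Rightarrow> 'l"
  assumes g: "cochain sl (hom_scale sm) (hom_space sl sm) k g"
  shows "cochain sl sm UNIV (Suc k) (uncurry_cochain k g)"
proof -
  have g_linear: "\<And>xs. length xs = k \<Longrightarrow> Vector_Spaces.linear sl sm (g xs)"
    and g_add: "\<And>xs i a b. length xs = k \<Longrightarrow> i < k \<Longrightarrow> g (xs[i := a + b]) = g (xs[i := a]) + g (xs[i := b])"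
    and g_scale: "\<And>xs i c a. length xs = k \<Longrightarrow> i < k \<Longrightarrow> g (xs[i := sl c a]) = hom_scale sm c (g (xs[i := a]))"
    using g unfolding cochain_def hom_space_def by blast+
  show ?thesis
    unfolding cochain_def
  proof (intro conjI allI impI)
    fix xs :: "'l list" and i a b c
    assume "length xs = Suc k \<and> i < Suc k"
    then obtain zs w where zw: "xs = zs @ [w]" "length zs = k" and i: "i < Suc k"
      by (auto simp: length_Suc_conv_snoc)
    show "uncurry_cochain k g (xs[i := a + b]) = uncurry_cochain k g (xs[i := a]) + uncurry_cochain k g (xs[i := b])"
    proof (cases "i = k")
      case True
      then show ?thesis using zw g_linear[OF zw(2)]
        by (simp add: uncurry_cochain_def list_update_append linear_iff)
    next
      case False
      then show ?thesis using zw i g_add[OF zw(2), of i a b]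
        by (simp add: uncurry_cochain_def list_update_append)
    qed
    show "uncurry_cochain k g (xs[i := sl c a]) = sm c (uncurry_cochain k g (xs[i := a]))"
    proof (cases "i = k")
      case True
      then show ?thesis using zw g_linear[OF zw(2)]
        by (simp add: uncurry_cochain_def list_update_append linear_iff)
    next
      case False
      then show ?thesis using zw i g_scale[OF zw(2), of i c a]
        by (simp add: uncurry_cochain_def list_update_append hom_scale_def)
    qed
  qed (simp_all add: uncurry_cochain_def)
qed

lemma curry_cochain_dL_ract_a:
  "curry_cochain (Suc k) (dL mult act (ract_a act) (Suc k) h)
     = dLt mult (hom_act mult act) k (curry_cochain k h)"
proof (intro ext)
  fix xs y
  show "curry_cochain (Suc k) (dL mult act (ract_a act) (Suc k) h) xs y
      = dLt mult (hom_act mult act) k (curry_cochain k h) xs y"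
  proof (cases "length xs = Suc k")
    case len: True
    define a where "a i = sgnv i (act (xs ! i) (h (del i xs @ [y])))" for i
    define b where "b i = sgnv i (h (del i xs @ [mult (xs ! i) y]))" for i
    define c where "c j i = sgnv (Suc i) (h (del i (xs[j := mult (xs ! i) (xs ! j)]) @ [y]))" for j i
    let ?ys = "xs @ [y]"
    have lhs: "curry_cochain (Suc k) (dL mult act (ract_a act) (Suc k) h) xs y =
       (\<Sum>i<Suc k. sgnv i (act (?ys ! i) (h (del i ?ys))))
       + (\<Sum>j<Suc (Suc k). \<Sum>i<j. sgnv (Suc i) (h (del i (?ys[j := mult (?ys ! i) (?ys ! j)]))))"
      using len by (simp add: curry_cochain_def dL_def ract_a_def)
    have left_action: "(\<Sum>i<Suc k. sgnv i (act (?ys ! i) (h (del i ?ys)))) = (\<Sum>i<Suc k. a i)"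
      using len by (intro sum.cong) (auto simp: a_def nth_append del_append)
    txt \<open>The products x_i x_(n+1) with the curried variable give the f(x y) part of the action.\<close>
    have products_with_last:
      "(\<Sum>i<Suc k. sgnv (Suc i) (h (del i (?ys[Suc k := mult (?ys ! i) (?ys ! Suc k)])))) = - (\<Sum>i<Suc k. b i)"
      unfolding sum_negf[symmetric]
      using len by (intro sum.cong) (auto simp: b_def nth_append list_update_append del_append sgnv_Suc)
    have other_products:
      "(\<Sum>j<Suc k. \<Sum>i<j. sgnv (Suc i) (h (del i (?ys[j := mult (?ys ! i) (?ys ! j)]))))
        = (\<Sum>j<Suc k. \<Sum>i<j. c j i)"
      using len by (intro sum.cong refl) (auto simp: c_def nth_append list_update_append del_append)
    have rhs: "dLt mult (hom_act mult act) k (curry_cochain k h) xs y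
        = (\<Sum>i<Suc k. a i - b i) + (\<Sum>j<Suc k. \<Sum>i<j. c j i)"
      using len
      by (simp add: dLt_def sum_apply sgnv_apply, intro arg_cong2[where f = "(+)"] sum.cong refl)
        (auto simp: a_def b_def c_def curry_cochain_def hom_act_def length_del sgnv_diff)
    show ?thesis
      unfolding lhs rhs left_action sum.lessThan_Suc[of _ "Suc k"] products_with_last other_products
      by (simp add: sum_subtractf)
  qed (simp add: curry_cochain_def dLt_def)
qed

lemma dL_ract_a_image_subspace:
  fixes sl :: "'k::field \<Rightarrow> 'l::ab_group_add \<Rightarrow> 'l" and mult :: "'l \<Rightarrow> 'l \<Rightarrow> 'l" and k :: nat
  assumes module_sm: "module sm"
    and act_add: "\<And>x m n. act x (m + n) = act x m + act x n"
    and act_scale: "\<And>x c m. act x (sm c m) = sm c (act x m)"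
  defines "B \<equiv> dL mult act (ract_a act) k ` cochains sl sm UNIV k"
  shows "0 \<in> B" and "a \<in> B \<Longrightarrow> b \<in> B \<Longrightarrow> a - b \<in> B" and "a \<in> B \<Longrightarrow> cscale sm c a \<in> B"
proof -
  note d_diff = dL_ract_a_diff[where act = act, OF act_add]
  have "dL mult act (ract_a act) k 0 = 0"
    using d_diff[where n = k and f = 0 and g = 0] by simp
  moreover have "0 \<in> cochains sl sm UNIV k"
    using cochain_zero[OF module_sm] by (simp add: cochains_def)
  ultimately show "0 \<in> B"
    unfolding B_def by (metis image_eqI)
next
  assume "a \<in> B" "b \<in> B"
  then obtain f g where "f \<in> cochains sl sm UNIV k" "g \<in> cochains sl sm UNIV k"
    and "a = dL mult act (ract_a act) k f" "b = dL mult act (ract_a act) k g"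
    unfolding B_def by blast
  moreover have "f - g \<in> cochains sl sm UNIV k"
    using calculation(1,2) cochain_diff[OF module_sm] by (simp add: cochains_def)
  ultimately show "a - b \<in> B"
    unfolding B_def
    using dL_ract_a_diff[where act = act and mult = mult and n = k and f = f and g = g, OF act_add]
    by (metis image_eqI)
next
  assume "a \<in> B"
  then obtain f where "f \<in> cochains sl sm UNIV k" "a = dL mult act (ract_a act) k f"
    unfolding B_def by blast
  moreover have "cscale sm c f \<in> cochains sl sm UNIV k"
    using calculation(1) cochain_cscale[OF module_sm] by (simp add: cochains_def)
  ultimately show "cscale sm c a \<in> B"
    unfolding B_def
    using dL_ract_a_cscale[where act = act and mult = mult and n = k and f = f, OF module_sm act_scale]
    by (metis image_eqI)
qed

context
  fixes sl :: "'k::field \<Rightarrow> 'l::ab_group_add \<Rightarrow> 'l"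
    and mult :: "'l \<Rightarrow> 'l \<Rightarrow> 'l"
    and sm :: "'k \<Rightarrow> 'm::ab_group_add \<Rightarrow> 'm"
    and act :: "'l \<Rightarrow> 'm \<Rightarrow> 'm"
  assumes vector_space_sl: "vector_space sl" and vector_space_sm: "vector_space sm"
begin

lemma curry_cochains:
  "curry_cochain k ` cochains sl sm UNIV (Suc k) = cochains sl (hom_scale sm) (hom_space sl sm) k"
proof
  show "curry_cochain k ` cochains sl sm UNIV (Suc k) \<subseteq> cochains sl (hom_scale sm) (hom_space sl sm) k"
    using curry_cochain_cochain[OF vector_space_sl vector_space_sm] by (auto simp: cochains_def)
  show "cochains sl (hom_scale sm) (hom_space sl sm) k \<subseteq> curry_cochain k ` cochains sl sm UNIV (Suc k)"
    using uncurry_cochain_cochain curry_uncurry_cochain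
    by (force simp: cochains_def intro: image_eqI[where x = "uncurry_cochain k _"])
qed

lemma curry_cocycles:
  "curry_cochain k ` cocycles sl sm UNIV (dL mult act (ract_a act)) (Suc k)
     = cocycles sl (hom_scale sm) (hom_space sl sm) (dLt mult (hom_act mult act)) k"
proof -
  have "dL mult act (ract_a act) (Suc k) f = 0 \<longleftrightarrow> dLt mult (hom_act mult act) k (curry_cochain k f) = 0"
    for f
  proof -
    have "dL mult act (ract_a act) (Suc k) f \<in> {g. \<forall>xs. length xs \<noteq> Suc (Suc k) \<longrightarrow> g xs = 0}"
      and "0 \<in> {g :: 'l list \<Rightarrow> 'm. \<forall>xs. length xs \<noteq> Suc (Suc k) \<longrightarrow> g xs = 0}"
      by (simp_all add: dL_def)
    then have "dL mult act (ract_a act) (Suc k) f = 0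
        \<longleftrightarrow> curry_cochain (Suc k) (dL mult act (ract_a act) (Suc k) f) = curry_cochain (Suc k) 0"
      using inj_on_eq_iff[OF inj_on_curry_cochain[of "Suc k"]] by blast
    then show ?thesis by (simp add: curry_cochain_dL_ract_a curry_cochain_zero)
  qed
  then show ?thesis
    unfolding cocycles_def curry_cochains[symmetric] by auto
qed

lemma curry_coboundaries:
  "curry_cochain k ` coboundaries sl sm UNIV (dL mult act (ract_a act)) (Suc k)
     = coboundaries sl (hom_scale sm) (hom_space sl sm) (dLt mult (hom_act mult act)) k"
proof (cases k)
  case 0
  have "dL mult act (ract_a act) 0 ` cochains sl sm UNIV 0 = {0}"
    using cochain_zero vector_space_sm
    by (auto simp: dL_ract_a_0 cochains_def module_iff_vector_space)
  then show ?thesis using 0 curry_cochain_zero by (simp add: coboundaries_def)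
next
  case (Suc k')
  have "curry_cochain k ` dL mult act (ract_a act) k ` cochains sl sm UNIV k
      = dLt mult (hom_act mult act) k' ` curry_cochain k' ` cochains sl sm UNIV (Suc k')"
    unfolding Suc image_image curry_cochain_dL_ract_a ..
  then show ?thesis using Suc by (simp add: coboundaries_def curry_cochains)
qed

lemma HL_ract_a_Suc_iso:
  assumes act_add: "\<And>x m n. act x (m + n) = act x m + act x n"
    and act_scale: "\<And>x c m. act x (sm c m) = sm c (act x m)"
  shows "HL_iso_HLt sl mult sm UNIV act (ract_a act) (Suc k)
           (hom_scale sm) (hom_space sl sm) (hom_act mult act) k"
proof -
  have module_sm: "module sm" using vector_space_sm by (simp add: module_iff_vector_space)
  let ?Z = "cocycles sl sm UNIV (dL mult act (ract_a act)) (Suc k)"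
  let ?B = "coboundaries sl sm UNIV (dL mult act (ract_a act)) (Suc k)"
  have B_eq: "?B = dL mult act (ract_a act) k ` cochains sl sm UNIV k"
    by (simp add: coboundaries_def)
  have B_subspace: "0 \<in> ?B" "\<And>a b. a \<in> ?B \<Longrightarrow> b \<in> ?B \<Longrightarrow> a - b \<in> ?B"
    "\<And>c a. a \<in> ?B \<Longrightarrow> cscale sm c a \<in> ?B"
    unfolding B_eq using dL_ract_a_image_subspace[where act = act, OF module_sm act_add act_scale]
    by blast+
  have cosets_vanish: "z + b \<in> {f. \<forall>xs. length xs \<noteq> Suc k \<longrightarrow> f xs = 0}"
    if z: "z \<in> ?Z" and b: "b \<in> ?B" for z b
  proof -
    obtain g where "b = dL mult act (ract_a act) k g" using b unfolding B_eq by blast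
    then show ?thesis using z by (simp add: cocycles_def cochains_def cochain_def dL_def)
  qed
  show ?thesis
    unfolding HL_iso_HLt_def
  proof (rule quot_iso_by_injective_map[where \<phi> = "curry_cochain k"])
    show "inj_on (curry_cochain k) {f. \<forall>xs. length xs \<noteq> Suc k \<longrightarrow> f xs = 0}"
      by (rule inj_on_curry_cochain)
  qed (fact cosets_vanish curry_cocycles curry_coboundaries curry_cochain_add B_subspace
      cscale_diff[OF module_sm] curry_cochain_cscale[OF module_sm])+
qed

end

theorem lemma1p4:
  fixes sl :: "'k::field \<Rightarrow> 'l::ab_group_add \<Rightarrow> 'l"
    and mult :: "'l \<Rightarrow> 'l \<Rightarrow> 'l"
    and sm :: "'k \<Rightarrow> 'm::ab_group_add \<Rightarrow> 'm"
    and act :: "'l \<Rightarrow> 'm \<Rightarrow> 'm"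
  assumes "left_leibniz_algebra sl mult"
    and "left_module sl mult sm UNIV act"
  shows "(\<forall>n. HL sl mult sm UNIV act (ract_s act) n = HLt sl mult sm UNIV act n)
    \<and> HL_iso_space sl mult sm UNIV act (ract_a act) 0 sm UNIV
    \<and> (\<forall>n\<ge>1.
         HL_iso_HLt sl mult sm UNIV act (ract_a act) n
           (hom_scale sm) (hom_space sl sm) (hom_act mult act) (n - 1)
       \<and> HLt sl mult (hom_scale sm) (hom_space sl sm) (hom_act mult act) (n - 1)
         = HL sl mult (hom_scale sm) (hom_space sl sm) (hom_act mult act)
             (ract_s (hom_act mult act)) (n - 1))"
proof -
  have vector_space_sl: "vector_space sl"
    using assms(1) by (simp add: left_leibniz_algebra_def)
  have vector_space_sm: "vector_space sm" and act_add: "\<And>x m n. act x (m + n) = act x m + act x n"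
    and act_scale: "\<And>x c m. act x (sm c m) = sm c (act x m)"
    using assms(2) by (simp_all add: left_module_def)
  have "HL_iso_HLt sl mult sm UNIV act (ract_a act) n
      (hom_scale sm) (hom_space sl sm) (hom_act mult act) (n - 1)" if "n \<ge> 1" for n
    using HL_ract_a_Suc_iso[where act = act, OF vector_space_sl vector_space_sm act_add act_scale, where k = "n - 1"] that
    by simp
  moreover have "HL_iso_space sl mult sm UNIV act (ract_a act) 0 sm UNIV"
    using HL_ract_a_0_iso vector_space_sm by (simp add: module_iff_vector_space)
  ultimately show ?thesis by (simp add: HL_ract_s)
qed

end
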